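(* Let $a,b,P_{\max}>0$ and set $\theta=b+b^2P_{\max}$. Define $$Q_{sym}=\frac{\Re\!\left(\sqrt{(a-\theta)(a-\theta+a^2P_{\max})}\right)-\theta}{ab}.$$ If $b\ge \sqrt{1+aP_{\max}}/P_{\max}$, then $Q_{sym}\le 0$. Consequently, in the symmetric two-user channel ($c=a$, $d=b$), both frontier curves $\Phi_1$ and $\Phi_2$ are convex.
   Context: This is the symmetric two-user interference channel with interference treated as noise. The rates are $R_1=\log_2(1+\frac{aP_1}{1+bP_2})$ and $R_2=\log_2(1+\frac{aP_2}{1+bP_1})$, with $P_i\in[0,P_{\max}]$. $\Phi_2$ is the curve of rate pairs with $P_2=P_{\max}$ and $P_1\in[0,P_{\max}]$; $\Phi_1$ is the curve with $P_1=P_{\max}$ and $P_2\in[0,P_{\max}]$. The second derivative of $\Phi_2$ (as $r_2$ versus $r_1$) has the sign of $P_1-Q_{sym}$, and by symmetry the same holds for $\Phi_1$ with $P_2$ in place of $P_1$. $\Re$ denotes the real part. *)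

theory Defs
  imports "HOL-Analysis.Analysis"
begin

text \<open>Rates of the symmetric two-user interference channel (c = a, d = b),
  interference treated as noise.\<close>
definition rate1 :: "real \<Rightarrow> real \<Rightarrow> real \<Rightarrow> real \<Rightarrow> real" where
  "rate1 a b P1 P2 = log 2 (1 + a * P1 / (1 + b * P2))"

definition rate2 :: "real \<Rightarrow> real \<Rightarrow> real \<Rightarrow> real \<Rightarrow> real" where
  "rate2 a b P1 P2 = log 2 (1 + a * P2 / (1 + b * P1))"

definition Phi2 :: "real \<Rightarrow> real \<Rightarrow> real \<Rightarrow> (real \<times> real) set" where
  "Phi2 a b Pmax = (\<lambda>P1. (rate1 a b P1 Pmax, rate2 a b P1 Pmax)) ` {0..Pmax}"

definition Phi1 :: "real \<Rightarrow> real \<Rightarrow> real \<Rightarrow> (real \<times> real) set" where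
  "Phi1 a b Pmax = (\<lambda>P2. (rate1 a b Pmax P2, rate2 a b Pmax P2)) ` {0..Pmax}"

definition convex_curve :: "(real \<times> real) set \<Rightarrow> bool" where
  "convex_curve C \<longleftrightarrow>
     (\<exists>g. convex_on (fst ` C) g \<and> C = (\<lambda>r. (r, g r)) ` (fst ` C))"

definition theta_sym :: "real \<Rightarrow> real \<Rightarrow> real \<Rightarrow> real" where
  "theta_sym a b Pmax = b + b^2 * Pmax"

definition Q_sym :: "real \<Rightarrow> real \<Rightarrow> real \<Rightarrow> real" where
  "Q_sym a b Pmax =
     (Re (csqrt (complex_of_real ((a - theta_sym a b Pmax) * (a - theta_sym a b Pmax + a^2 * Pmax))))
       - theta_sym a b Pmax) / (a * b)"

end

theory Submission
  imports Defs
begin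

text \<open>
  Put theta = b + b^2 P. The power condition b \<ge> sqrt (1 + a P) / P
  yields the key inequality a (1 + a P) \<le> theta (2 + a P), which is equivalent to
  (a - theta)(a - theta + a^2 P) \<le> theta^2; this says exactly that the real part of
  the square root in Q_sym does not exceed theta, i.e. Q_sym \<le> 0.

  For convexity, both frontier curves are written as graphs r_2 = g(r_1) with
  g(r) = log 2 ((alpha + beta 2^r) / (gamma + delta 2^r)). A general second-derivative
  computation shows that such a g is convex wherever
  (beta gamma - alpha delta)(alpha gamma - beta delta 4^r) \<ge> 0. On Phi_2 this follows
  from the radicand bound above, on Phi_1 from the key inequality.
\<close>

lemma power_threshold_inequality:
  fixes a b P :: real
  assumes a: "a > 0" and P: "P > 0" and h: "b \<ge> sqrt (1 + a*P) / P"
  shows "a * (1 + a*P) \<le> theta_sym a b P * (2 + a*P)"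
proof -
  define s where "s = sqrt (1 + a*P)"
  have s1: "s \<ge> 1" and s2: "s^2 = 1 + a*P" unfolding s_def using a P by simp_all
  have bP: "b*P \<ge> s" using h P unfolding s_def by (simp add: field_simps)
  have thetaP: "theta_sym a b P * P \<ge> s * (1 + s)"
  proof -
    have "theta_sym a b P * P = (b*P) * (1 + b*P)"
      unfolding theta_sym_def by (simp add: algebra_simps power2_eq_square)
    also have "\<dots> \<ge> s * (1 + s)" using bP s1 by (intro mult_mono) auto
    finally show ?thesis .
  qed
  have "a*P * (1 + a*P) = (s^2 - 1) * s^2" using s2 by simp
  also have "\<dots> \<le> s * (1 + s) * (1 + s^2)"
  proof -
    have "(s - 1) * s \<le> 1 + s^2" using s1 by (simp add: power2_eq_square algebra_simps)
    then have "(s - 1) * s * (s * (1 + s)) \<le> (1 + s^2) * (s * (1 + s))"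
      using s1 by (intro mult_right_mono) auto
    then show ?thesis by (simp add: power2_eq_square algebra_simps)
  qed
  also have "\<dots> \<le> theta_sym a b P * P * (1 + s^2)" using thetaP s1 by (intro mult_right_mono) auto
  also have "\<dots> = theta_sym a b P * P * (2 + a*P)" using s2 by simp
  finally show ?thesis using P by (simp add: mult.commute mult.left_commute)
qed

text \<open>Reformulation of the key inequality: the radicand of Q_sym, which is the
  product of the constants alpha and gamma below, is at most theta^2.\<close>
lemma discriminant_le_square:
  fixes a P \<theta> :: real
  assumes "a \<ge> 0" and "a * (1 + a*P) \<le> \<theta> * (2 + a*P)"
  shows "(a - \<theta>) * (a - \<theta> + a^2*P) \<le> \<theta>^2"
proof -
  have "\<theta>^2 - (a - \<theta>) * (a - \<theta> + a^2*P) = a * (\<theta> * (2 + a*P) - a * (1 + a*P))"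
    by (simp add: algebra_simps power2_eq_square)
  also have "\<dots> \<ge> 0" using assms by simp
  finally show ?thesis by simp
qed

text \<open>If the radicand is at most theta^2, the real part of its square root is at
  most theta (it is 0 for a negative radicand), hence Q_sym \<le> 0.\<close>
lemma Q_sym_nonpos:
  fixes a b P :: real
  defines "\<theta> \<equiv> theta_sym a b P"
  assumes a: "a > 0" and b: "b > 0" and P: "P \<ge> 0"
    and disc: "(a - \<theta>) * (a - \<theta> + a^2*P) \<le> \<theta>^2"
  shows "Q_sym a b P \<le> 0"
proof -
  define x where "x = (a - \<theta>) * (a - \<theta> + a^2*P)"
  have \<theta>: "\<theta> > 0" unfolding \<theta>_def theta_sym_def using b P by (simp add: add_pos_nonneg)
  have "Re (csqrt (complex_of_real x)) \<le> \<theta>"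
  proof (cases "x \<ge> 0")
    case True
    then have "Re (csqrt (complex_of_real x)) = sqrt x" by (simp add: csqrt_of_real)
    also have "\<dots> \<le> sqrt (\<theta>^2)" using disc unfolding x_def by (rule real_sqrt_le_mono)
    also have "\<dots> = \<theta>" using \<theta> by simp
    finally show ?thesis .
  next
    case False
    then show ?thesis using \<theta> by simp
  qed
  then show ?thesis unfolding Q_sym_def \<theta>_def[symmetric] x_def[symmetric]
    using a b by (simp add: divide_nonpos_pos)
qed

text \<open>Logarithm of a fractional-linear function of 2^r. Both frontier curves turn out
  to be graphs of such functions of r = r_1.\<close>
definition log_mobius :: "real \<Rightarrow> real \<Rightarrow> real \<Rightarrow> real \<Rightarrow> real \<Rightarrow> real" where
  "log_mobius \<alpha> \<beta> \<gamma> \<delta> r = log 2 ((\<alpha> + \<beta> * 2 powr r) / (\<gamma> + \<delta> * 2 powr r))"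

lemma convex_on_cong_on:
  assumes f: "convex_on S f" and eq: "\<And>x. x \<in> S \<Longrightarrow> f x = g x"
  shows "convex_on S g"
proof
  show S: "convex S" using f by (simp add: convex_on_def)
  fix t :: real and x y assume t: "0 < t" "t < 1" and xy: "x \<in> S" "y \<in> S"
  have "(1 - t) *\<^sub>R x + t *\<^sub>R y \<in> S" using S xy t by (intro convexD) auto
  then show "g ((1 - t) *\<^sub>R x + t *\<^sub>R y) \<le> (1 - t) * g x + t * g y"
    using convex_onD[OF f, of t x y] t xy by (simp add: eq)
qed

lemma DERIV_ln_affine_pow2:
  fixes \<alpha> \<beta> r :: real
  assumes "\<alpha> + \<beta> * 2 powr r > 0"
  shows "((\<lambda>r. ln (\<alpha> + \<beta> * 2 powr r)) has_real_derivative
           ln 2 * (\<beta> * 2 powr r / (\<alpha> + \<beta> * 2 powr r))) (at r)"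
  using assms by (auto intro!: derivative_eq_intros simp: field_simps)

lemma DERIV_affine_pow2_ratio:
  fixes \<alpha> \<beta> r :: real
  assumes "\<alpha> + \<beta> * 2 powr r \<noteq> 0"
  shows "((\<lambda>r. \<beta> * 2 powr r / (\<alpha> + \<beta> * 2 powr r)) has_real_derivative
           ln 2 * \<alpha> * \<beta> * 2 powr r / (\<alpha> + \<beta> * 2 powr r)^2) (at r)"
  using assms by (auto intro!: derivative_eq_intros simp: field_simps power2_eq_square)

text \<open>Second-derivative test for log_mobius: with E = 2^r, the second derivative has
  the sign of (beta gamma - alpha delta)(alpha gamma - beta delta E^2).\<close>
lemma convex_on_log_mobius:
  fixes \<alpha> \<beta> \<gamma> \<delta> :: real and I :: "real set"
  assumes I: "convex I"
    and num: "\<And>r. r \<in> I \<Longrightarrow> \<alpha> + \<beta> * 2 powr r > 0"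
    and den: "\<And>r. r \<in> I \<Longrightarrow> \<gamma> + \<delta> * 2 powr r > 0"
    and sign: "\<And>r. r \<in> I \<Longrightarrow> (\<beta>*\<gamma> - \<alpha>*\<delta>) * (\<alpha>*\<gamma> - \<beta>*\<delta>*(2 powr r)^2) \<ge> 0"
  shows "convex_on I (log_mobius \<alpha> \<beta> \<gamma> \<delta>)"
proof -
  define f where "f r = ln (\<alpha> + \<beta> * 2 powr r) - ln (\<gamma> + \<delta> * 2 powr r)" for r
  define f' where "f' r = ln 2 * (\<beta> * 2 powr r / (\<alpha> + \<beta> * 2 powr r))
                       - ln 2 * (\<delta> * 2 powr r / (\<gamma> + \<delta> * 2 powr r))" for r
  define f'' where "f'' r = ln 2 * (ln 2 * \<alpha> * \<beta> * 2 powr r / (\<alpha> + \<beta> * 2 powr r)^2)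
                        - ln 2 * (ln 2 * \<gamma> * \<delta> * 2 powr r / (\<gamma> + \<delta> * 2 powr r)^2)" for r
  have "convex_on I f"
  proof (rule f''_ge0_imp_convex[OF I])
    fix r assume r: "r \<in> I"
    define E where "E = 2 powr r"
    define u where "u = \<alpha> + \<beta> * E"
    define v where "v = \<gamma> + \<delta> * E"
    have u: "u > 0" and v: "v > 0"
      using num[OF r] den[OF r] unfolding u_def v_def E_def by auto
    show "DERIV f r :> f' r"
      unfolding f_def f'_def using u v unfolding u_def v_def E_def
      by (intro DERIV_diff DERIV_ln_affine_pow2)
    show "DERIV f' r :> f'' r"
      unfolding f'_def f''_def using u v unfolding u_def v_def E_def
      by (intro DERIV_diff DERIV_cmult DERIV_affine_pow2_ratio) auto
    have factor: "\<alpha> * \<beta> * v^2 - \<gamma> * \<delta> * u^2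
                    = (\<beta> * \<gamma> - \<alpha> * \<delta>) * (\<alpha> * \<gamma> - \<beta> * \<delta> * E^2)"
      unfolding u_def v_def by (simp add: algebra_simps power2_eq_square)
    have "f'' r = (ln 2)^2 * E * (\<alpha> * \<beta> * v^2 - \<gamma> * \<delta> * u^2) / (u^2 * v^2)"
      unfolding f''_def E_def[symmetric] u_def[symmetric] v_def[symmetric]
      using u v by (simp add: field_simps power2_eq_square)
    also have "\<dots> \<ge> 0"
      unfolding factor using sign[OF r] unfolding E_def by simp
    finally show "f'' r \<ge> 0" .
  qed
  then have "convex_on I (\<lambda>r. f r / ln 2)"
    by (intro convex_on_cdiv) simp_all
  moreover have "f r / ln 2 = log_mobius \<alpha> \<beta> \<gamma> \<delta> r" if "r \<in> I" for r
    using num[OF that] den[OF that]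
    by (simp add: log_mobius_def f_def log_def ln_div diff_divide_distrib)
  ultimately show ?thesis
    by (rule convex_on_cong_on)
qed

lemma min_endpoints_le_affine:
  fixes A B t T :: real
  assumes "0 \<le> t" and "t \<le> T"
  shows "min B (A * T + B) \<le> A * t + B"
proof (cases "A \<ge> 0")
  case True
  then have "0 \<le> A * t" using assms by simp
  then show ?thesis by linarith
next
  case False
  then have "A * T \<le> A * t" using assms by (intro mult_left_mono_neg) auto
  then show ?thesis by linarith
qed

lemma convex_curve_graph:
  fixes F G g :: "real \<Rightarrow> real" and S T :: "real set"
  assumes "continuous_on S F" and "connected S" and "F ` S \<subseteq> T" and "convex_on T g"
    and "\<And>p. p \<in> S \<Longrightarrow> G p = g (F p)"
  shows "convex_curve ((\<lambda>p. (F p, G p)) ` S)"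
proof -
  have abscissae: "fst ` ((\<lambda>p. (F p, G p)) ` S) = F ` S" by (simp add: image_image)
  have "connected (F ` S)" using assms(1,2) by (rule connected_continuous_image)
  then have "convex (F ` S)" by (simp add: is_interval_connected_1[symmetric] is_interval_convex_1)
  then have "convex_on (F ` S) g" by (rule convex_on_subset[OF assms(4,3)])
  moreover have "(\<lambda>p. (F p, G p)) ` S = (\<lambda>r. (r, g r)) ` F ` S"
    using assms(5) by (auto simp: image_image image_iff)
  ultimately show ?thesis unfolding convex_curve_def abscissae by blast
qed

lemma Phi2_graph:
  fixes a b P p :: real
  defines "\<theta> \<equiv> theta_sym a b P"
  assumes "a > 0" and "b > 0" and "P > 0" and "0 \<le> p"
  shows "rate2 a b p P = log_mobius (a - \<theta> + a^2*P) \<theta> (a - \<theta>) \<theta> (rate1 a b p P)"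
proof -
  define y where "y = 1 + a*p / (1 + b*P)"
  have bP: "1 + b*P > 0" and bp: "1 + b*p > 0"
    using assms by (simp_all add: add_pos_nonneg)
  have "y > 0" unfolding y_def using assms bP by (simp add: add_pos_nonneg)
  then have pow: "2 powr rate1 a b p P = y" unfolding rate1_def y_def by simp
  have den: "a - \<theta> + \<theta> * y = a * (1 + b*p)"
    unfolding y_def \<theta>_def theta_sym_def using bP by (simp add: field_simps power2_eq_square)
  have "(a - \<theta> + a^2*P + \<theta> * y) / (a - \<theta> + \<theta> * y)
          = (a * (1 + b*p) + a^2*P) / (a * (1 + b*p))"
    using den by (simp add: algebra_simps)
  also have "\<dots> = 1 + a*P / (1 + b*p)"
    using assms bp by (simp add: add_divide_distrib power2_eq_square)
  finally have ratio: "(a - \<theta> + a^2*P + \<theta> * y) / (a - \<theta> + \<theta> * y) = 1 + a*P / (1 + b*p)" .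
  show ?thesis unfolding log_mobius_def pow rate2_def ratio ..
qed

lemma Phi1_graph:
  fixes a b P p :: real
  defines "\<theta> \<equiv> theta_sym a b P"
  assumes "a > 0" and "b > 0" and "P > 0" and "0 \<le> p"
  shows "rate2 a b P p = log_mobius (a - \<theta> + a^2*P) (\<theta> - a) (- \<theta>) \<theta> (rate1 a b P p)"
proof -
  define w where "w = a*P / (1 + b*p)"
  have bP: "1 + b*P > 0" and bp: "1 + b*p > 0"
    using assms by (simp_all add: add_pos_nonneg)
  have "1 + w > 0" unfolding w_def using assms bp by (simp add: add_pos_nonneg)
  then have pow: "2 powr rate1 a b P p = 1 + w" unfolding rate1_def w_def by simp
  have "w > 0" unfolding w_def using assms bp by simp
  have \<theta>: "\<theta> = b * (1 + b*P)" unfolding \<theta>_def theta_sym_def by (simp add: algebra_simps power2_eq_square)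
  have num: "a - \<theta> + a^2*P + (\<theta> - a) * (1 + w) = w * (\<theta> + a*b*p)"
    unfolding w_def using bp by (simp add: field_simps power2_eq_square)
  have den: "- \<theta> + \<theta> * (1 + w) = w * \<theta>" by (simp add: algebra_simps)
  have "(a - \<theta> + a^2*P + (\<theta> - a) * (1 + w)) / (- \<theta> + \<theta> * (1 + w))
          = (\<theta> + a*b*p) / \<theta>"
    unfolding num den using \<open>w > 0\<close> by simp
  also have "\<dots> = 1 + a*p / (1 + b*P)"
    unfolding \<theta> using assms bP by (simp add: add_divide_distrib)
  finally have ratio: "(a - \<theta> + a^2*P + (\<theta> - a) * (1 + w)) / (- \<theta> + \<theta> * (1 + w))
                         = 1 + a*p / (1 + b*P)" .
  show ?thesis unfolding log_mobius_def pow rate2_def ratio ..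
qed

text \<open>Phi_2 is convex: along it r_1 \<ge> 0, so E = 2^r_1 \<ge> 1, and both sign factors are
  nonpositive because the radicand is at most theta^2 \<le> theta^2 E^2.\<close>
lemma Phi2_convex:
  fixes a b P :: real
  defines "\<theta> \<equiv> theta_sym a b P"
  assumes a: "a > 0" and b: "b > 0" and P: "P > 0"
    and disc: "(a - \<theta>) * (a - \<theta> + a^2*P) \<le> \<theta>^2"
  shows "convex_curve (Phi2 a b P)"
proof -
  have \<theta>: "\<theta> > 0" unfolding \<theta>_def theta_sym_def using b P by (simp add: add_pos_nonneg)
  have aaP: "a^2 * P > 0" using a P by simp
  have bP: "1 + b*P > 0" using b P by (simp add: add_pos_nonneg)
  have "convex_on {0..} (log_mobius (a - \<theta> + a^2*P) \<theta> (a - \<theta>) \<theta>)"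
  proof (rule convex_on_log_mobius)
    fix r :: real assume "r \<in> {0..}"
    then have "2 powr r \<ge> 1" by (simp add: ge_one_powr_ge_zero)
    then have \<theta>y: "\<theta> \<le> \<theta> * 2 powr r" and "1 \<le> (2 powr r)^2"
      using \<theta> by (simp_all add: one_le_power)
    then have "\<theta>^2 \<le> \<theta> * \<theta> * (2 powr r)^2"
      using mult_left_mono[of 1 "(2 powr r)^2" "\<theta>^2"] by (simp add: power2_eq_square[of \<theta>])
    show "a - \<theta> + \<theta> * 2 powr r > 0" using \<theta>y a by linarith
    then show "a - \<theta> + a^2*P + \<theta> * 2 powr r > 0" using aaP by linarith
    have "\<theta> * (a - \<theta>) - (a - \<theta> + a^2*P) * \<theta> = - (a^2 * P * \<theta>)"
      by (simp add: algebra_simps)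
    then have "\<theta> * (a - \<theta>) - (a - \<theta> + a^2*P) * \<theta> \<le> 0"
      using aaP \<theta> by simp
    moreover have "(a - \<theta> + a^2*P) * (a - \<theta>) - \<theta> * \<theta> * (2 powr r)^2 \<le> 0"
      using disc \<open>\<theta>^2 \<le> _\<close> by (simp add: mult.commute)
    ultimately show "(\<theta> * (a - \<theta>) - (a - \<theta> + a^2*P) * \<theta>)
                      * ((a - \<theta> + a^2*P) * (a - \<theta>) - \<theta> * \<theta> * (2 powr r)^2) \<ge> 0"
      by (rule mult_nonpos_nonpos)
  qed simp
  then show ?thesis unfolding Phi2_def
  proof (rule convex_curve_graph[rotated 3])
    have "1 + a*p / (1 + b*P) > 0" if "p \<in> {0..P}" for p
      using that a bP by (simp add: add_pos_nonneg)
    then show "continuous_on {0..P} (\<lambda>p. rate1 a b p P)"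
      unfolding rate1_def using bP by (intro continuous_intros) fastforce+
    show "(\<lambda>p. rate1 a b p P) ` {0..P} \<subseteq> {0..}"
      unfolding rate1_def using a bP by (auto simp: add_pos_nonneg)
    show "rate2 a b p P = log_mobius (a - \<theta> + a^2*P) \<theta> (a - \<theta>) \<theta> (rate1 a b p P)"
      if "p \<in> {0..P}" for p
      using Phi2_graph[of a b P p] that a b P unfolding \<theta>_def by simp
  qed simp
qed

text \<open>The two affine expressions governing Phi_1, in y - 1 and in y^2 - 1, are controlled by
  their values at the ends of the range 1 < y \<le> 1 + a P; at the far end the second one is
  a P times the slack in the key inequality.\<close>
lemma Phi1_affine_bounds:
  fixes a P \<theta> y :: real
  assumes a: "a > 0" and P: "P > 0" and \<theta>: "\<theta> > 0"
    and threshold: "a * (1 + a*P) \<le> \<theta> * (2 + a*P)"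
    and y: "1 < y" "y \<le> 1 + a*P"
  shows "(\<theta> - a) * (y - 1) + a^2*P > 0" and "(\<theta> - a) * (y^2 - 1) + a^2*P \<ge> 0"
proof -
  have aP: "a * P > 0" and aaP: "a^2 * P > 0" using a P by simp_all
  have "min (a^2*P) ((\<theta> - a) * (a*P) + a^2*P) \<le> (\<theta> - a) * (y - 1) + a^2*P"
    using y by (intro min_endpoints_le_affine) auto
  moreover have "(\<theta> - a) * (a*P) + a^2*P = \<theta> * (a*P)"
    by (simp add: algebra_simps power2_eq_square)
  ultimately show "(\<theta> - a) * (y - 1) + a^2*P > 0"
    using \<theta> aP aaP by (smt (verit) mult_pos_pos)
  have "1 \<le> y^2" "y^2 \<le> (1 + a*P)^2" using y by (simp_all add: one_le_power power_mono)
  then have "min (a^2*P) ((\<theta> - a) * ((1 + a*P)^2 - 1) + a^2*P) \<le> (\<theta> - a) * (y^2 - 1) + a^2*P"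
    by (intro min_endpoints_le_affine) auto
  moreover have "(\<theta> - a) * ((1 + a*P)^2 - 1) + a^2*P = a*P * (\<theta> * (2 + a*P) - a * (1 + a*P))"
    by (simp add: algebra_simps power2_eq_square)
  ultimately show "(\<theta> - a) * (y^2 - 1) + a^2*P \<ge> 0"
    using threshold aP aaP by (smt (verit) mult_nonneg_nonneg)
qed

text \<open>Phi_1 is convex: along it 0 < r_1 \<le> log 2 (1 + a P); the sign condition reduces to
  (theta - a)(E^2 - 1) + a^2 P \<ge> 0, which at the far end E = 1 + a P is the key inequality.\<close>
lemma Phi1_convex:
  fixes a b P :: real
  defines "\<theta> \<equiv> theta_sym a b P"
  assumes a: "a > 0" and b: "b > 0" and P: "P > 0"
    and threshold: "a * (1 + a*P) \<le> \<theta> * (2 + a*P)"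
  shows "convex_curve (Phi1 a b P)"
proof -
  define T where "T = {0<..log 2 (1 + a*P)}"
  have \<theta>: "\<theta> > 0" unfolding \<theta>_def theta_sym_def using b P by (simp add: add_pos_nonneg)
  have aP: "a * P > 0" using a P by simp
  have aaP: "a^2 * P > 0" using a P by simp
  have "convex_on T (log_mobius (a - \<theta> + a^2*P) (\<theta> - a) (- \<theta>) \<theta>)"
  proof (rule convex_on_log_mobius)
    fix r :: real assume "r \<in> T"
    then have r: "0 < r" "r \<le> log 2 (1 + a*P)" unfolding T_def by auto
    define y where "y = 2 powr r"
    have y: "1 < y" "y \<le> 1 + a*P"
      unfolding y_def using r powr_le_cancel_iff[of 2 r "log 2 (1 + a*P)"] aP by auto
    note bounds = Phi1_affine_bounds[OF a P \<theta> threshold y]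
    show "a - \<theta> + a^2*P + (\<theta> - a) * 2 powr r > 0"
      using bounds(1) unfolding y_def by (simp add: algebra_simps)
    show "- \<theta> + \<theta> * 2 powr r > 0" using \<theta> y unfolding y_def by simp
    have "((\<theta> - a) * - \<theta> - (a - \<theta> + a^2*P) * \<theta>)
                     * ((a - \<theta> + a^2*P) * - \<theta> - (\<theta> - a) * \<theta> * y^2)
                   = (a^2 * P * \<theta>^2) * ((\<theta> - a) * (y^2 - 1) + a^2*P)"
      by (simp add: algebra_simps power2_eq_square)
    then show "((\<theta> - a) * - \<theta> - (a - \<theta> + a^2*P) * \<theta>)
                 * ((a - \<theta> + a^2*P) * - \<theta> - (\<theta> - a) * \<theta> * (2 powr r)^2) \<ge> 0"
      using bounds(2) aaP unfolding y_def by simp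
  next
    show "convex T" unfolding T_def by simp
  qed
  then show ?thesis unfolding Phi1_def
  proof (rule convex_curve_graph[rotated 3])
    have bp: "1 + b*p > 0" if "p \<in> {0..P}" for p using that b by (simp add: add_pos_nonneg)
    have "1 + a*P / (1 + b*p) > 0" if "p \<in> {0..P}" for p
      using bp[OF that] aP by (simp add: add_pos_nonneg)
    then show "continuous_on {0..P} (\<lambda>p. rate1 a b P p)"
      unfolding rate1_def using bp by (intro continuous_intros) fastforce+
    show "(\<lambda>p. rate1 a b P p) ` {0..P} \<subseteq> T"
    proof
      fix x assume "x \<in> (\<lambda>p. rate1 a b P p) ` {0..P}"
      then obtain p where p: "p \<in> {0..P}" and x: "x = log 2 (1 + a*P / (1 + b*p))"
        unfolding rate1_def by auto
      have "0 < a*P / (1 + b*p)" "a*P / (1 + b*p) \<le> a*P"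
        using aP bp[OF p] p b by (simp_all add: divide_le_eq mult_le_cancel_left1)
      then show "x \<in> T" unfolding T_def x by simp
    qed
    show "rate2 a b P p = log_mobius (a - \<theta> + a^2*P) (\<theta> - a) (- \<theta>) \<theta> (rate1 a b P p)"
      if "p \<in> {0..P}" for p
      using Phi1_graph[of a b P p] that a b P unfolding \<theta>_def by simp
  qed simp
qed

theorem mainTheorem10:
  fixes a b Pmax :: real
  assumes "a > 0" and "b > 0" and "Pmax > 0"
    and "b \<ge> sqrt (1 + a * Pmax) / Pmax"
  shows "Q_sym a b Pmax \<le> 0 \<and> convex_curve (Phi1 a b Pmax) \<and> convex_curve (Phi2 a b Pmax)"
proof -
  have threshold: "a * (1 + a*Pmax) \<le> theta_sym a b Pmax * (2 + a*Pmax)"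
    using assms(1,3,4) by (rule power_threshold_inequality)
  then have disc: "(a - theta_sym a b Pmax) * (a - theta_sym a b Pmax + a^2*Pmax)
                     \<le> (theta_sym a b Pmax)^2"
    using assms(1) by (intro discriminant_le_square) auto
  show ?thesis
    using Q_sym_nonpos[OF assms(1,2) _ disc] Phi1_convex[OF assms(1-3) threshold]
      Phi2_convex[OF assms(1-3) disc] assms(3) by simp
qed

end
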